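(* Both identities $((xy)z)(xy)=((yx)z)(yx)$ and $(z(yx))(xy)=(z(xy))(yx)$ are consequences of $\mathcal{B}_{1,2,4}$, where $\mathcal{B}_{1,2,4}$ consists of (M1) $(xy)(zt)=(xz)(yt)$, (M2) $(xy)(zt)=(ty)(zx)$, (M3) $((xy)z)t=((xt)z)y$, (M4) $(x(yz))t=(x(tz))y$, (M5) $x((yz)t)=z((yx)t)$, (M6) $x(y(zt))=z(y(xt))$, and $x(x(yz))=(x(zy))x$. *)

theory Defs
  imports Main
begin

end

theory Submission
  imports Defs
begin

text \<open>Using (M2), (M7) and one of (M4), (M6), each side of either identity rewrites to a term
  in which \<open>z\<close> is multiplied on the left twice by one of \<open>x\<close>, \<open>y\<close> and twice by the other (for
  the first identity, followed by one right multiplication). Since (M6) says that the left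
  multiplications satisfy \<open>L\<^sub>a L\<^sub>b L\<^sub>c = L\<^sub>c L\<^sub>b L\<^sub>a\<close>, these normal forms are symmetric in \<open>x\<close> and \<open>y\<close>
  (with (M4) moving the outer right factor), which exchanges the two sides.\<close>

lemma left_squares_commute:
  fixes m :: "'a \<Rightarrow> 'a \<Rightarrow> 'a"
  assumes M6: "\<And>x y z t. m x (m y (m z t)) = m z (m y (m x t))"
  shows "m y (m y (m x (m x z))) = m x (m x (m y (m y z)))"
proof -
  have "m y (m y (m x (m x z))) = m y (m x (m x (m y z)))"
    by (simp only: M6[of y x x z])
  also have "\<dots> = m x (m x (m y (m y z)))"
    by (rule M6)
  finally show ?thesis .
qed

lemma left_squares_commute_right_mult:
  fixes m :: "'a \<Rightarrow> 'a \<Rightarrow> 'a"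
  assumes M4: "\<And>x y z t. m (m x (m y z)) t = m (m x (m t z)) y"
      and M6: "\<And>x y z t. m x (m y (m z t)) = m z (m y (m x t))"
  shows "m (m x (m y (m y z))) x = m (m y (m x (m x z))) y"
proof -
  have "m (m x (m y (m y z))) x = m (m y (m y (m x z))) x"
    by (simp only: M6[of x y y z])
  also have "\<dots> = m (m y (m x (m x z))) y"
    by (rule M4)
  finally show ?thesis .
qed

lemma first_identity_normal_form:
  fixes m :: "'a \<Rightarrow> 'a \<Rightarrow> 'a"
  assumes M2: "\<And>x y z t. m (m x y) (m z t) = m (m t y) (m z x)"
      and M6: "\<And>x y z t. m x (m y (m z t)) = m z (m y (m x t))"
      and M7: "\<And>x y z. m x (m x (m y z)) = m (m x (m z y)) x"
  shows "m (m (m x y) z) (m x y) = m (m x (m y (m y z))) x"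
proof -
  have "m (m (m x y) z) (m x y) = m (m y z) (m x (m x y))"
    by (rule M2)
  also have "\<dots> = m x (m x (m (m y z) y))"
    by (rule M6)
  also have "\<dots> = m (m x (m y (m y z))) x"
    by (rule M7)
  finally show ?thesis .
qed

lemma second_identity_normal_form:
  fixes m :: "'a \<Rightarrow> 'a \<Rightarrow> 'a"
  assumes M2: "\<And>x y z t. m (m x y) (m z t) = m (m t y) (m z x)"
      and M4: "\<And>x y z t. m (m x (m y z)) t = m (m x (m t z)) y"
      and M7: "\<And>x y z. m x (m x (m y z)) = m (m x (m z y)) x"
  shows "m (m z (m y x)) (m x y) = m y (m y (m x (m x z)))"
proof -
  have "m (m z (m y x)) (m x y) = m (m y (m y x)) (m x z)"
    by (rule M2)
  also have "\<dots> = m (m y (m (m x z) x)) y"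
    by (rule M4)
  also have "\<dots> = m y (m y (m x (m x z)))"
    by (rule M7[symmetric])
  finally show ?thesis .
qed

theorem lemma6p1:
  fixes m :: "'a \<Rightarrow> 'a \<Rightarrow> 'a"
  assumes M1: "\<And>x y z t. m (m x y) (m z t) = m (m x z) (m y t)"
      and M2: "\<And>x y z t. m (m x y) (m z t) = m (m t y) (m z x)"
      and M3: "\<And>x y z t. m (m (m x y) z) t = m (m (m x t) z) y"
      and M4: "\<And>x y z t. m (m x (m y z)) t = m (m x (m t z)) y"
      and M5: "\<And>x y z t. m x (m (m y z) t) = m z (m (m y x) t)"
      and M6: "\<And>x y z t. m x (m y (m z t)) = m z (m y (m x t))"
      and M7: "\<And>x y z. m x (m x (m y z)) = m (m x (m z y)) x"
  shows "(\<forall>x y z. m (m (m x y) z) (m x y) = m (m (m y x) z) (m y x))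
       \<and> (\<forall>x y z. m (m z (m y x)) (m x y) = m (m z (m x y)) (m y x))"
proof (intro conjI allI)
  fix x y z
  have "m (m (m x y) z) (m x y) = m (m x (m y (m y z))) x"
    by (rule first_identity_normal_form[of m, OF M2 M6 M7])
  also have "\<dots> = m (m y (m x (m x z))) y"
    by (rule left_squares_commute_right_mult[of m, OF M4 M6])
  also have "\<dots> = m (m (m y x) z) (m y x)"
    by (rule first_identity_normal_form[of m, OF M2 M6 M7, symmetric])
  finally show "m (m (m x y) z) (m x y) = m (m (m y x) z) (m y x)" .
  have "m (m z (m y x)) (m x y) = m y (m y (m x (m x z)))"
    by (rule second_identity_normal_form[of m, OF M2 M4 M7])
  also have "\<dots> = m x (m x (m y (m y z)))"
    by (rule left_squares_commute[of m, OF M6])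
  also have "\<dots> = m (m z (m x y)) (m y x)"
    by (rule second_identity_normal_form[of m, OF M2 M4 M7, symmetric])
  finally show "m (m z (m y x)) (m x y) = m (m z (m x y)) (m y x)" .
qed

end
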